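(* Let $a_1,\ldots,a_k\ge 0$ and $d\in\mathbb{R}$, let $\mathbf{x}=[x_1,\ldots,x_k]^T\in\mathbb{R}^k$, and for $l=1,\ldots,k$ let $\mathbf{a}_l=[a_1,\ldots,a_l,0,\ldots,0]^T\in\mathbb{R}^k$. For $1\le l<k$ let $y_l=a_{l+1}\,\mathbf{a}_l^T\mathbf{x}-\|\mathbf{a}_l\|^2x_{l+1}$. If $\mathbf{a}_{l+1}^T\mathbf{x}>\tfrac12 d\|\mathbf{a}_{l+1}\|^2$ and $y_l>0$, then $\mathbf{a}_l^T\mathbf{x}>\tfrac12 d\|\mathbf{a}_l\|^2$. *)

theory Defs
  imports "HOL-Analysis.Analysis"
begin

text \<open>Vectors in R^k are represented as functions nat => real, with components 1..k.
  trunc_vec a l is the vector [a_1,...,a_l,0,...,0].\<close>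

definition trunc_vec :: "(nat \<Rightarrow> real) \<Rightarrow> nat \<Rightarrow> nat \<Rightarrow> real" where
  "trunc_vec a l = (\<lambda>i. if i \<le> l then a i else 0)"

definition dotk :: "nat \<Rightarrow> (nat \<Rightarrow> real) \<Rightarrow> (nat \<Rightarrow> real) \<Rightarrow> real" where
  "dotk k u v = (\<Sum>i=1..k. u i * v i)"

definition normsqk :: "nat \<Rightarrow> (nat \<Rightarrow> real) \<Rightarrow> real" where
  "normsqk k u = (\<Sum>i=1..k. (u i)^2)"

end

theory Submission
  imports Defs
begin

text \<open>Passing from \<open>a\<^sub>l\<close> to \<open>a\<^sub>l\<^sub>+\<^sub>1\<close> adds \<open>b t\<close> to the inner product \<open>S = a\<^sub>l\<^sup>T x\<close>
  and \<open>b\<^sup>2\<close> to the squared norm \<open>N = \<parallel>a\<^sub>l\<parallel>\<^sup>2\<close>, where \<open>b = a\<^sub>l\<^sub>+\<^sub>1\<close> and \<open>t = x\<^sub>l\<^sub>+\<^sub>1\<close>.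
  The hypothesis \<open>y\<^sub>l > 0\<close> says \<open>N t < b S\<close>, hence \<open>N (S + b t) \<le> S (N + b\<^sup>2)\<close>: the ratio
  \<open>S / N\<close> is at least \<open>(S + b t) / (N + b\<^sup>2)\<close>, which exceeds \<open>d/2\<close> by assumption.
  Here \<open>N > 0\<close>, since \<open>N = 0\<close> forces \<open>S = 0\<close> and hence \<open>y\<^sub>l = 0\<close>.\<close>

lemma dotk_trunc_vec_Suc:
  assumes "Suc l \<le> k"
  shows "dotk k (trunc_vec a (Suc l)) x = dotk k (trunc_vec a l) x + a (Suc l) * x (Suc l)"
proof -
  have "trunc_vec a (Suc l) i * x i = trunc_vec a l i * x i + (if i = Suc l then a (Suc l) * x i else 0)"
    for i by (auto simp: trunc_vec_def)
  then show ?thesis using assms by (simp add: dotk_def sum.distrib)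
qed

lemma normsqk_trunc_vec_Suc:
  assumes "Suc l \<le> k"
  shows "normsqk k (trunc_vec a (Suc l)) = normsqk k (trunc_vec a l) + (a (Suc l))\<^sup>2"
proof -
  have "(trunc_vec a (Suc l) i)\<^sup>2 = (trunc_vec a l i)\<^sup>2 + (if i = Suc l then (a (Suc l))\<^sup>2 else 0)"
    for i by (auto simp: trunc_vec_def)
  then show ?thesis using assms by (simp add: normsqk_def sum.distrib)
qed

lemma normsqk_nonneg: "normsqk k u \<ge> 0"
  unfolding normsqk_def by (simp add: sum_nonneg)

lemma dotk_eq_0_if_normsqk_eq_0:
  assumes "normsqk k u = 0"
  shows "dotk k u v = 0"
proof -
  have "\<forall>i\<in>{1..k}. (u i)\<^sup>2 = 0"
    using assms unfolding normsqk_def by (subst (asm) sum_nonneg_eq_0_iff) auto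
  then show ?thesis unfolding dotk_def by (intro sum.neutral) auto
qed

lemma mediant_lower_bound:
  fixes S N b t d :: real
  assumes "N > 0" and "b \<ge> 0"
    and "S + b * t > d / 2 * (N + b\<^sup>2)"
    and "b * S - N * t > 0"
  shows "S > d / 2 * N"
proof -
  have "b * (N * t) \<le> b * (b * S)"
    using assms(2,4) by (intro mult_left_mono) auto
  then have "N * (S + b * t) \<le> S * (N + b\<^sup>2)"
    by (simp add: algebra_simps power2_eq_square)
  moreover have "N * (d / 2 * (N + b\<^sup>2)) < N * (S + b * t)"
    using assms(1,3) by simp
  ultimately have "(N + b\<^sup>2) * (d / 2 * N) < (N + b\<^sup>2) * S"
    by (simp add: algebra_simps)
  moreover have "N + b\<^sup>2 > 0"
    using assms(1) by (simp add: add_pos_nonneg)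
  ultimately show ?thesis by simp
qed

theorem lemma2:
  fixes k l :: nat and a x :: "nat \<Rightarrow> real" and d :: real
  assumes "\<forall>i\<in>{1..k}. a i \<ge> 0"
    and "1 \<le> l" and "l < k"
    and "dotk k (trunc_vec a (l+1)) x > d / 2 * normsqk k (trunc_vec a (l+1))"
    and "a (l+1) * dotk k (trunc_vec a l) x - normsqk k (trunc_vec a l) * x (l+1) > 0"
  shows "dotk k (trunc_vec a l) x > d / 2 * normsqk k (trunc_vec a l)"
proof (rule mediant_lower_bound)
  show "a (l+1) \<ge> 0"
    using assms(1-3) by simp
  show "dotk k (trunc_vec a l) x + a (l+1) * x (l+1)
      > d / 2 * (normsqk k (trunc_vec a l) + (a (l+1))\<^sup>2)"
    using assms(3,4) by (simp add: dotk_trunc_vec_Suc normsqk_trunc_vec_Suc)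
  show "a (l+1) * dotk k (trunc_vec a l) x - normsqk k (trunc_vec a l) * x (l+1) > 0"
    by (fact assms(5))
  show "normsqk k (trunc_vec a l) > 0"
    using assms(5) normsqk_nonneg[of k "trunc_vec a l"]
      dotk_eq_0_if_normsqk_eq_0[of k "trunc_vec a l" x]
    by (cases "normsqk k (trunc_vec a l) = 0") auto
qed

end
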